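(* Let $q\ge 2$, let $\mathcal{X}=\mathcal{Y}=\{0,\ldots,q-1\}$, and let $G$ be an error graph for a discrete memoryless channel with input alphabet $\mathcal{X}$ and output alphabet $\mathcal{Y}$. Let $n=n_1+n_2$ with $n_1,n_2$ nonnegative integers, and let $H=(U\sqcup V,E)$ be the bipartite graph whose parts $U$ and $V$ are both copies of $\mathcal{X}^{n_1}$ (input and output sequences of length $n_1$), where $u\in U$ and $v\in V$ are adjacent if and only if $v\neq u$ and $v$ can be obtained from $u$ by a single error. Then a single-error-correcting transmission strategy of length $n$ with one-time feedback after the first $n_1$ symbols that transmits $$M=\sum_{u\in U}M(u)$$ messages exists if and only if there exists a family of nonadaptive single-error-correcting codes $\mathcal{C}(u)$, $u\in \mathcal{X}^{n_1}$, of length $n_2$, where $\mathcal{C}(u)$ has cardinality $M(u)$ and $F(u)$ free points, satisfying $$\sum_{u:\,(u,v)\in E}M(u)\le F(v)\quad\text{for every } v\in V.$$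
   Context: Error graph: a bipartite graph $G$ whose left part is $\mathcal{X}$ and right part is $\mathcal{Y}$; for $q_1\neq q_2$, $q_1$ and $q_2$ are joined if an error may change transmitted symbol $q_1$ into received symbol $q_2$. An error in a transmitted sequence means replacing one symbol $q_1$ by a symbol $q_2$ with $(q_1,q_2)$ an edge of $G$; "a single error" means at most one such replacement occurs in the whole transmission. A transmission strategy with one-time feedback after $n_1$ symbols for messages $m\in[M]$: the first $n_1$ transmitted symbols are a function of $m$ only; after they are sent, the encoder learns (error-free, instantaneously) the $n_1$ received symbols, and the remaining $n_2$ transmitted symbols are a function of $m$ and of those received symbols. For a message $m$, its cloud $B(m)$ is the set of output sequences in $\mathcal{Y}^n$ that can be received when $m$ is sent and at most one error occurs; the strategy is single-error-correcting (transmits $M$ messages) if the clouds $B(m)$, $m\in[M]$, are pairwise disjoint. A nonadaptive code of length $n_2$ is a strategy without feedback (each message is mapped to a fixed codeword in $\mathcal{X}^{n_2}$); it is single-error-correcting if its clouds are pairwise disjoint, and its free points are the points of $\mathcal{Y}^{n_2}$ lying in no cloud; $F(u)$ denotes their number for $\mathcal{C}(u)$. *)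

theory Defs
  imports Main
begin

definition seqs :: "nat \<Rightarrow> nat \<Rightarrow> nat list set" where
  "seqs q n = {xs. length xs = n \<and> set xs \<subseteq> {..<q}}"

text \<open>Error graph: a set of pairs (q1,q2), q1 \<noteq> q2, meaning q1 may be received as q2.\<close>

definition error_graph :: "nat \<Rightarrow> (nat \<times> nat) set \<Rightarrow> bool" where
  "error_graph q G \<longleftrightarrow> G \<subseteq> {..<q} \<times> {..<q} \<and> (\<forall>(a,b)\<in>G. a \<noteq> b)"

definition one_err :: "(nat \<times> nat) set \<Rightarrow> nat list \<Rightarrow> nat list set" where
  "one_err G x = {y. length y = length x \<and>
     (y = x \<or> (\<exists>i<length x. (x ! i, y ! i) \<in> G \<and> (\<forall>j<length x. j \<noteq> i \<longrightarrow> y ! j = x ! j)))}"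

definition fb_cloud :: "(nat \<times> nat) set \<Rightarrow> (nat \<Rightarrow> nat list) \<Rightarrow> (nat \<Rightarrow> nat list \<Rightarrow> nat list)
    \<Rightarrow> nat \<Rightarrow> nat list set" where
  "fb_cloud G f1 f2 m = {y1 @ y2 | y1 y2.
      (y1 = f1 m \<and> y2 \<in> one_err G (f2 m y1)) \<or> (y1 \<in> one_err G (f1 m) \<and> y2 = f2 m y1)}"

definition fb_strategy_sec :: "nat \<Rightarrow> (nat \<times> nat) set \<Rightarrow> nat \<Rightarrow> nat \<Rightarrow> nat
    \<Rightarrow> (nat \<Rightarrow> nat list) \<Rightarrow> (nat \<Rightarrow> nat list \<Rightarrow> nat list) \<Rightarrow> bool" where
  "fb_strategy_sec q G n1 n2 M f1 f2 \<longleftrightarrow>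
     (\<forall>m<M. f1 m \<in> seqs q n1 \<and> (\<forall>y1\<in>seqs q n1. f2 m y1 \<in> seqs q n2)) \<and>
     (\<forall>m<M. \<forall>m'<M. m \<noteq> m' \<longrightarrow> fb_cloud G f1 f2 m \<inter> fb_cloud G f1 f2 m' = {})"

definition code_sec :: "(nat \<times> nat) set \<Rightarrow> nat list set \<Rightarrow> bool" where
  "code_sec G C \<longleftrightarrow> (\<forall>c\<in>C. \<forall>c'\<in>C. c \<noteq> c' \<longrightarrow> one_err G c \<inter> one_err G c' = {})"

definition free_points :: "nat \<Rightarrow> nat \<Rightarrow> (nat \<times> nat) set \<Rightarrow> nat list set \<Rightarrow> nat list set" where
  "free_points q n G C = seqs q n - (\<Union>c\<in>C. one_err G c)"

definition H_edge :: "(nat \<times> nat) set \<Rightarrow> nat list \<Rightarrow> nat list \<Rightarrow> bool" where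
  "H_edge G u v \<longleftrightarrow> v \<noteq> u \<and> v \<in> one_err G u"

end

theory Submission
  imports Defs
begin

text \<open>Split a received word after its first n1 symbols. Given the received prefix v, the suffixes
  that message m can still produce are the radius-one ball around f2 m v if m sent v (no error
  yet), the single point f2 m v if m sent a neighbour of v in H (the error is spent), and
  nothing otherwise. Hence the clouds are pairwise disjoint iff, for every v, the codewords of
  the messages that sent v form a single-error-correcting code C(v) of size M(v), and the
  messages that sent a neighbour of v are sent to distinct free points of C(v).
  Conversely, enumerate the pairs (u, c) with c in C(u) as messages; the counting condition is
  exactly what allows these free points to be chosen injectively.\<close>

lemma finite_seqs: "finite (seqs q n)"
proof -
  have "seqs q n = {xs. set xs \<subseteq> {..<q} \<and> length xs = n}"
    unfolding seqs_def by blast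
  then show ?thesis by (simp add: finite_lists_length_eq)
qed

lemma length_one_err: "y \<in> one_err G x \<Longrightarrow> length y = length x"
  by (simp add: one_err_def)

lemma one_err_refl: "x \<in> one_err G x"
  by (simp add: one_err_def)

lemma one_err_subset_seqs:
  assumes "error_graph q G" and "x \<in> seqs q n"
  shows "one_err G x \<subseteq> seqs q n"
proof
  fix y assume y: "y \<in> one_err G x"
  have "y ! j < q" if "j < length y" for j
  proof -
    have "x ! j \<in> set x" using that length_one_err[OF y] by simp
    then have "x ! j < q" using assms(2) by (auto simp: seqs_def)
    then show ?thesis
      using y that assms(1) by (cases "y = x") (auto simp: one_err_def error_graph_def)
  qed
  then show "y \<in> seqs q n"
    using assms(2) length_one_err[OF y] by (auto simp: seqs_def in_set_conv_nth)
qed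

lemma sum_card_fibres:
  assumes "finite S" "finite T" "f ` S \<subseteq> T"
  shows "(\<Sum>u\<in>T. card {x\<in>S. f x = u}) = card S"
  using sum.group[OF assms, of "\<lambda>_. 1::nat"] by simp

definition fb_slice :: "(nat \<times> nat) set \<Rightarrow> (nat \<Rightarrow> nat list) \<Rightarrow> (nat \<Rightarrow> nat list \<Rightarrow> nat list)
    \<Rightarrow> nat \<Rightarrow> nat list \<Rightarrow> nat list set" where
  "fb_slice G f1 f2 m v = {w. v @ w \<in> fb_cloud G f1 f2 m}"

lemma fb_slice_eq:
  assumes "length v = length (f1 m)"
  shows "fb_slice G f1 f2 m v =
    (if v = f1 m then one_err G (f2 m v) else if H_edge G (f1 m) v then {f2 m v} else {})"
proof -
  have "v @ w \<in> fb_cloud G f1 f2 m \<longleftrightarrow>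
      (v = f1 m \<and> w \<in> one_err G (f2 m v)) \<or> (v \<in> one_err G (f1 m) \<and> w = f2 m v)" for w
  proof -
    have "v @ w = y1 @ y2 \<longleftrightarrow> v = y1 \<and> w = y2"
      if "y1 = f1 m \<or> y1 \<in> one_err G (f1 m)" for y1 y2
    proof -
      have "length y1 = length v" using that assms by (auto dest: length_one_err)
      then show ?thesis by simp
    qed
    then show ?thesis unfolding fb_cloud_def by blast
  qed
  then show ?thesis
    by (auto simp: fb_slice_def H_edge_def one_err_refl)
qed

lemma fb_cloud_disjoint_iff_slices:
  assumes "error_graph q G" and "f1 m \<in> seqs q n1"
  shows "fb_cloud G f1 f2 m \<inter> fb_cloud G f1 f2 m' = {} \<longleftrightarrow>
    (\<forall>v\<in>seqs q n1. fb_slice G f1 f2 m v \<inter> fb_slice G f1 f2 m' v = {})"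
proof
  assume "fb_cloud G f1 f2 m \<inter> fb_cloud G f1 f2 m' = {}"
  then show "\<forall>v\<in>seqs q n1. fb_slice G f1 f2 m v \<inter> fb_slice G f1 f2 m' v = {}"
    by (auto simp: fb_slice_def)
next
  assume slices: "\<forall>v\<in>seqs q n1. fb_slice G f1 f2 m v \<inter> fb_slice G f1 f2 m' v = {}"
  show "fb_cloud G f1 f2 m \<inter> fb_cloud G f1 f2 m' = {}"
  proof (rule ccontr)
    assume "fb_cloud G f1 f2 m \<inter> fb_cloud G f1 f2 m' \<noteq> {}"
    then obtain z where z: "z \<in> fb_cloud G f1 f2 m" "z \<in> fb_cloud G f1 f2 m'" by blast
    from z(1) obtain v w where "z = v @ w" and v: "v = f1 m \<or> v \<in> one_err G (f1 m)"
      by (auto simp: fb_cloud_def)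
    then have "v \<in> seqs q n1"
      using one_err_subset_seqs[OF assms(1,2)] assms(2) by blast
    moreover have "w \<in> fb_slice G f1 f2 m v \<inter> fb_slice G f1 f2 m' v"
      using z \<open>z = v @ w\<close> by (simp add: fb_slice_def)
    ultimately show False using slices by blast
  qed
qed

definition sec_code_with_free_points ::
    "(nat \<times> nat) set \<Rightarrow> 'm set \<Rightarrow> 'm set \<Rightarrow> ('m \<Rightarrow> nat list) \<Rightarrow> bool" where
  "sec_code_with_free_points G P Q c \<longleftrightarrow>
     inj_on c P \<and> code_sec G (c ` P) \<and> inj_on c Q \<and> (\<forall>m\<in>Q. \<forall>p\<in>P. c m \<notin> one_err G (c p))"

lemma disjoint_balls_points_iff_sec_code_with_free_points:
  fixes G :: "(nat \<times> nat) set" and c :: "'m \<Rightarrow> nat list"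
  assumes "P \<inter> Q = {}"
  defines "B m \<equiv> if m \<in> P then one_err G (c m) else if m \<in> Q then {c m} else {}"
  shows "(\<forall>m m'. m \<noteq> m' \<longrightarrow> B m \<inter> B m' = {}) \<longleftrightarrow> sec_code_with_free_points G P Q c"
proof
  assume disj: "\<forall>m m'. m \<noteq> m' \<longrightarrow> B m \<inter> B m' = {}"
  have in_B: "c m \<in> B m" if "m \<in> P \<union> Q" for m
    using that by (auto simp: B_def one_err_refl)
  have eq: "m = m'" if "m \<in> P \<union> Q" "m' \<in> P \<union> Q" "x \<in> B m" "x \<in> B m'" for m m' x
    using disj that by blast
  have "inj_on c P" "inj_on c Q"
    using eq in_B by (metis UnI1 UnI2 inj_onI)+
  moreover have "code_sec G (c ` P)"
    unfolding code_sec_def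
  proof (intro ballI impI)
    fix x x' assume "x \<in> c ` P" "x' \<in> c ` P" "x \<noteq> x'"
    then obtain p p' where "p \<in> P" "p' \<in> P" "x = c p" "x' = c p'" "p \<noteq> p'" by blast
    then show "one_err G x \<inter> one_err G x' = {}"
      using disj[rule_format, of p p'] by (simp add: B_def)
  qed
  moreover have "c m \<notin> one_err G (c p)" if "m \<in> Q" "p \<in> P" for m p
    using eq[of m p "c m"] in_B[of m] that assms(1) by (auto simp: B_def)
  ultimately show "sec_code_with_free_points G P Q c"
    by (simp add: sec_code_with_free_points_def)
next
  assume "sec_code_with_free_points G P Q c"
  then have "B m \<inter> B m' = {}" if "m \<noteq> m'" for m m'
    using that unfolding sec_code_with_free_points_def code_sec_def B_def
    by (auto simp: inj_on_def) (metis disjoint_iff)+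
  then show "\<forall>m m'. m \<noteq> m' \<longrightarrow> B m \<inter> B m' = {}" by blast
qed

lemma fb_strategy_sec_iff_codes_with_free_points:
  assumes "error_graph q G"
  shows "fb_strategy_sec q G n1 n2 M f1 f2 \<longleftrightarrow>
    (\<forall>m<M. f1 m \<in> seqs q n1 \<and> (\<forall>y\<in>seqs q n1. f2 m y \<in> seqs q n2)) \<and>
    (\<forall>v\<in>seqs q n1. sec_code_with_free_points G
        {m\<in>{..<M}. f1 m = v} {m\<in>{..<M}. H_edge G (f1 m) v} (\<lambda>m. f2 m v))"
    (is "_ \<longleftrightarrow> ?typed \<and> (\<forall>v\<in>seqs q n1. sec_code_with_free_points G (?P v) (?Q v) _)")
proof (cases ?typed)
  case typed: True
  define B where "B v m = (if m \<in> ?P v then one_err G (f2 m v)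
    else if m \<in> ?Q v then {f2 m v} else {})" for v m
  have slice: "fb_slice G f1 f2 m v = B v m" if "m < M" "v \<in> seqs q n1" for m v
    using that typed fb_slice_eq[of v f1 m] by (simp add: B_def seqs_def)
  have B_empty: "B v m = {}" if "\<not> m < M" for m v
    using that by (simp add: B_def)
  have "(\<forall>m<M. \<forall>m'<M. m \<noteq> m' \<longrightarrow> fb_cloud G f1 f2 m \<inter> fb_cloud G f1 f2 m' = {}) \<longleftrightarrow>
      (\<forall>m<M. \<forall>m'<M. m \<noteq> m' \<longrightarrow>
         (\<forall>v\<in>seqs q n1. fb_slice G f1 f2 m v \<inter> fb_slice G f1 f2 m' v = {}))"
    using fb_cloud_disjoint_iff_slices[OF assms, of f1 _ n1 f2] typed
    by auto
  also have "\<dots> \<longleftrightarrow> (\<forall>v\<in>seqs q n1. \<forall>m m'. m \<noteq> m' \<longrightarrow> B v m \<inter> B v m' = {})"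
  proof -
    have "B v m \<inter> B v m' = {} \<longleftrightarrow>
        (m < M \<longrightarrow> m' < M \<longrightarrow> fb_slice G f1 f2 m v \<inter> fb_slice G f1 f2 m' v = {})"
      if "v \<in> seqs q n1" for v m m'
      using slice B_empty that by (cases "m < M"; cases "m' < M") auto
    then show ?thesis by meson
  qed
  also have "\<dots> \<longleftrightarrow> (\<forall>v\<in>seqs q n1. sec_code_with_free_points G (?P v) (?Q v) (\<lambda>m. f2 m v))"
  proof -
    have "?P v \<inter> ?Q v = {}" for v by (auto simp: H_edge_def)
    then have "(\<forall>m m'. m \<noteq> m' \<longrightarrow> B v m \<inter> B v m' = {}) \<longleftrightarrow>
        sec_code_with_free_points G (?P v) (?Q v) (\<lambda>m. f2 m v)" for v
      using disjoint_balls_points_iff_sec_code_with_free_points[of "?P v" "?Q v" G "\<lambda>m. f2 m v"]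
      unfolding B_def by blast
    then show ?thesis by blast
  qed
  finally show ?thesis
    using typed by (simp only: fb_strategy_sec_def)
next
  case False
  then show ?thesis unfolding fb_strategy_sec_def by blast
qed

lemma codes_of_fb_strategy:
  assumes "error_graph q G" and "fb_strategy_sec q G n1 n2 M f1 f2"
  defines "P u \<equiv> {m\<in>{..<M}. f1 m = u}"
  defines "C u \<equiv> (\<lambda>m. f2 m u) ` P u"
  shows "M = (\<Sum>u\<in>seqs q n1. card (P u))"
    and "u \<in> seqs q n1 \<Longrightarrow> C u \<subseteq> seqs q n2 \<and> code_sec G (C u) \<and> card (C u) = card (P u)"
    and "v \<in> seqs q n1 \<Longrightarrow>
      (\<Sum>u\<in>{u\<in>seqs q n1. H_edge G u v}. card (P u)) \<le> card (free_points q n2 G (C v))"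
proof -
  have f1: "\<And>m. m < M \<Longrightarrow> f1 m \<in> seqs q n1"
    and f2: "\<And>m y. m < M \<Longrightarrow> y \<in> seqs q n1 \<Longrightarrow> f2 m y \<in> seqs q n2"
    and local: "\<And>v. v \<in> seqs q n1 \<Longrightarrow> sec_code_with_free_points G
        (P v) {m\<in>{..<M}. H_edge G (f1 m) v} (\<lambda>m. f2 m v)"
    using assms(2) unfolding fb_strategy_sec_iff_codes_with_free_points[OF assms(1)] P_def by blast+
  show "M = (\<Sum>u\<in>seqs q n1. card (P u))"
  proof -
    have "f1 ` {..<M} \<subseteq> seqs q n1" using f1 by auto
    from sum_card_fibres[OF _ finite_seqs this] show ?thesis by (simp add: P_def)
  qed
  show "C u \<subseteq> seqs q n2 \<and> code_sec G (C u) \<and> card (C u) = card (P u)"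
    if "u \<in> seqs q n1"
    using local[OF that] f2 that
    by (auto simp: C_def P_def sec_code_with_free_points_def card_image)
  show "(\<Sum>u\<in>{u\<in>seqs q n1. H_edge G u v}. card (P u)) \<le> card (free_points q n2 G (C v))"
    if v: "v \<in> seqs q n1"
  proof -
    define Q where "Q = {m\<in>{..<M}. H_edge G (f1 m) v}"
    have "(\<Sum>u\<in>{u\<in>seqs q n1. H_edge G u v}. card (P u)) =
        (\<Sum>u\<in>{u\<in>seqs q n1. H_edge G u v}. card {m\<in>Q. f1 m = u})"
      by (intro sum.cong refl arg_cong[where f = card]) (auto simp: P_def Q_def)
    also have "\<dots> = card Q"
      by (rule sum_card_fibres) (auto simp: Q_def finite_seqs f1)
    also have "\<dots> = card ((\<lambda>m. f2 m v) ` Q)"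
      using local[OF v] by (simp add: Q_def sec_code_with_free_points_def card_image)
    also have "\<dots> \<le> card (free_points q n2 G (C v))"
    proof (rule card_mono)
      show "finite (free_points q n2 G (C v))"
        by (simp add: free_points_def finite_seqs)
      show "(\<lambda>m. f2 m v) ` Q \<subseteq> free_points q n2 G (C v)"
        using local[OF v] f2 v
        by (auto simp: Q_def C_def free_points_def sec_code_with_free_points_def)
    qed
    finally show ?thesis .
  qed
qed

lemma bij_betw_Sigma_fibre:
  assumes "bij_betw g K (Sigma U C)" and "u \<in> U"
  shows "bij_betw (snd \<circ> g) {k\<in>K. fst (g k) = u} (C u)"
proof -
  have "inj_on (snd \<circ> g) {k\<in>K. fst (g k) = u}"
    using bij_betw_imp_inj_on[OF assms(1)] by (auto simp: inj_on_def prod_eq_iff)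
  moreover have "(snd \<circ> g) ` {k\<in>K. fst (g k) = u} = C u"
  proof
    show "(snd \<circ> g) ` {k\<in>K. fst (g k) = u} \<subseteq> C u"
      using bij_betw_apply[OF assms(1)] by force
    show "C u \<subseteq> (snd \<circ> g) ` {k\<in>K. fst (g k) = u}"
    proof
      fix c assume "c \<in> C u"
      then have "(u, c) \<in> g ` K"
        using assms by (simp add: bij_betw_def)
      then obtain k where "k \<in> K" "g k = (u, c)" by auto
      then show "c \<in> (snd \<circ> g) ` {k\<in>K. fst (g k) = u}"
        by (auto intro: image_eqI[of _ _ k])
    qed
  qed
  ultimately show ?thesis by (simp add: bij_betw_def)
qed

lemma fb_strategy_sec_of_enumeration:
  assumes "0 < q" and "error_graph q G"
    and codes: "\<And>u. u \<in> seqs q n1 \<Longrightarrow> C u \<subseteq> seqs q n2 \<and> code_sec G (C u)"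
    and g: "bij_betw g {..<M} (Sigma (seqs q n1) C)"
    and h: "\<And>v. v \<in> seqs q n1 \<Longrightarrow>
      inj_on (h v) {m\<in>{..<M}. H_edge G (fst (g m)) v} \<and>
      h v ` {m\<in>{..<M}. H_edge G (fst (g m)) v} \<subseteq> free_points q n2 G (C v)"
  defines "f1 m \<equiv> fst (g m)"
    \<comment> \<open>replicate n2 0 is an arbitrary filler for prefixes that cannot be received\<close>
    and "f2 m y \<equiv> if y = fst (g m) then snd (g m)
      else if H_edge G (fst (g m)) y then h y m else replicate n2 0"
  shows "fb_strategy_sec q G n1 n2 M f1 f2"
  unfolding fb_strategy_sec_iff_codes_with_free_points[OF assms(2)]
proof (intro conjI allI impI ballI)
  fix m assume m: "m < M"
  have "g m \<in> Sigma (seqs q n1) C"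
    using bij_betw_apply[OF g] m by simp
  then have gm: "fst (g m) \<in> seqs q n1" "snd (g m) \<in> C (fst (g m))"
    by (auto simp: mem_Sigma_iff split: prod.splits)
  then show "f1 m \<in> seqs q n1" by (simp add: f1_def)
  fix y assume y: "y \<in> seqs q n1"
  have "replicate n2 0 \<in> seqs q n2"
    using assms(1) by (simp add: seqs_def set_replicate_conv_if)
  then show "f2 m y \<in> seqs q n2"
    using gm codes[of "fst (g m)"] h[OF y] m
    by (auto simp: f2_def free_points_def)
next
  fix v assume v: "v \<in> seqs q n1"
  define P where "P = {m\<in>{..<M}. fst (g m) = v}"
  define Q where "Q = {m\<in>{..<M}. H_edge G (fst (g m)) v}"
  have on_P: "f2 m v = snd (g m)" if "m \<in> P" for m
    using that by (simp add: P_def f2_def)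
  have on_Q: "f2 m v = h v m" if "m \<in> Q" for m
    using that by (auto simp: Q_def f2_def H_edge_def)
  have fibre: "bij_betw (snd \<circ> g) P (C v)"
    unfolding P_def using bij_betw_Sigma_fibre[OF g v] .
  have "inj_on (\<lambda>m. f2 m v) P" "(\<lambda>m. f2 m v) ` P = C v"
    using fibre on_P by (auto simp: bij_betw_def inj_on_def)
  moreover have "inj_on (\<lambda>m. f2 m v) Q" "(\<lambda>m. f2 m v) ` Q \<subseteq> free_points q n2 G (C v)"
    using h[OF v] on_Q unfolding Q_def by (auto simp: inj_on_def)
  ultimately show "sec_code_with_free_points G
      {m\<in>{..<M}. f1 m = v} {m\<in>{..<M}. H_edge G (f1 m) v} (\<lambda>m. f2 m v)"
    using codes[OF v]
    by (auto simp: sec_code_with_free_points_def P_def Q_def f1_def free_points_def)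
qed

lemma fb_strategy_of_codes:
  assumes "0 < q" and "error_graph q G"
    and codes: "\<forall>u\<in>seqs q n1. C u \<subseteq> seqs q n2 \<and> code_sec G (C u) \<and> card (C u) = Mf u"
    and free: "\<forall>v\<in>seqs q n1.
      (\<Sum>u\<in>{u\<in>seqs q n1. H_edge G u v}. Mf u) \<le> card (free_points q n2 G (C v))"
  shows "\<exists>f1 f2. fb_strategy_sec q G n1 n2 (\<Sum>u\<in>seqs q n1. Mf u) f1 f2"
proof -
  define M where "M = (\<Sum>u\<in>seqs q n1. Mf u)"
  have finite_C: "finite (C u)" and card_C: "card (C u) = Mf u" if "u \<in> seqs q n1" for u
    using codes that finite_seqs finite_subset by blast+
  then have "finite (Sigma (seqs q n1) C)" "card (Sigma (seqs q n1) C) = M"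
    by (simp_all add: M_def card_SigmaI finite_seqs)
  then obtain g where g: "bij_betw g {..<M} (Sigma (seqs q n1) C)"
    using ex_bij_betw_nat_finite[of "Sigma (seqs q n1) C"] by (auto simp: atLeast0LessThan)
  have "\<forall>v\<in>seqs q n1. \<exists>h. inj_on h {m\<in>{..<M}. H_edge G (fst (g m)) v} \<and>
      h ` {m\<in>{..<M}. H_edge G (fst (g m)) v} \<subseteq> free_points q n2 G (C v)"
  proof
    fix v assume v: "v \<in> seqs q n1"
    define A where "A = {m\<in>{..<M}. H_edge G (fst (g m)) v}"
    have "fst ` g ` {..<M} \<subseteq> seqs q n1"
      using bij_betw_imp_surj_on[OF g] by auto
    then have "card A = (\<Sum>u\<in>{u\<in>seqs q n1. H_edge G u v}. card {m\<in>A. fst (g m) = u})"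
      by (intro sum_card_fibres[symmetric]) (auto simp: A_def finite_seqs)
    also have "\<dots> = (\<Sum>u\<in>{u\<in>seqs q n1. H_edge G u v}. Mf u)"
    proof (intro sum.cong refl)
      fix u assume u: "u \<in> {u\<in>seqs q n1. H_edge G u v}"
      then have "{m\<in>A. fst (g m) = u} = {m\<in>{..<M}. fst (g m) = u}"
        by (auto simp: A_def)
      then show "card {m\<in>A. fst (g m) = u} = Mf u"
        using bij_betw_same_card[OF bij_betw_Sigma_fibre[OF g]] u card_C by simp
    qed
    also have "\<dots> \<le> card (free_points q n2 G (C v))"
      using free v by blast
    finally have "card A \<le> card (free_points q n2 G (C v))" .
    moreover have "finite A" "finite (free_points q n2 G (C v))"
      by (simp_all add: A_def free_points_def finite_seqs)
    ultimately show "\<exists>h. inj_on h {m\<in>{..<M}. H_edge G (fst (g m)) v} \<and>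
        h ` {m\<in>{..<M}. H_edge G (fst (g m)) v} \<subseteq> free_points q n2 G (C v)"
      using card_le_inj[of A "free_points q n2 G (C v)"] unfolding A_def by blast
  qed
  then obtain h where h: "\<forall>v\<in>seqs q n1.
      inj_on (h v) {m\<in>{..<M}. H_edge G (fst (g m)) v} \<and>
      h v ` {m\<in>{..<M}. H_edge G (fst (g m)) v} \<subseteq> free_points q n2 G (C v)"
    by (rule bchoice[elim_format]) blast
  have "\<And>u. u \<in> seqs q n1 \<Longrightarrow> C u \<subseteq> seqs q n2 \<and> code_sec G (C u)"
    using codes by blast
  from fb_strategy_sec_of_enumeration[OF assms(1,2) this g h[rule_format]] show ?thesis
    unfolding M_def by blast
qed

theorem theorem1:
  fixes q n1 n2 M :: nat and G :: "(nat \<times> nat) set"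
  assumes "q \<ge> 2" and "error_graph q G"
  shows "(\<exists>f1 f2. fb_strategy_sec q G n1 n2 M f1 f2) \<longleftrightarrow>
    (\<exists>Mf :: nat list \<Rightarrow> nat. \<exists>C :: nat list \<Rightarrow> nat list set.
        M = (\<Sum>u\<in>seqs q n1. Mf u) \<and>
        (\<forall>u\<in>seqs q n1. C u \<subseteq> seqs q n2 \<and> code_sec G (C u) \<and> card (C u) = Mf u) \<and>
        (\<forall>v\<in>seqs q n1. (\<Sum>u\<in>{u\<in>seqs q n1. H_edge G u v}. Mf u)
                          \<le> card (free_points q n2 G (C v))))"
proof
  assume "\<exists>f1 f2. fb_strategy_sec q G n1 n2 M f1 f2"
  then obtain f1 f2 where strategy: "fb_strategy_sec q G n1 n2 M f1 f2" by blast
  show "\<exists>Mf C. M = (\<Sum>u\<in>seqs q n1. Mf u) \<and>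
        (\<forall>u\<in>seqs q n1. C u \<subseteq> seqs q n2 \<and> code_sec G (C u) \<and> card (C u) = Mf u) \<and>
        (\<forall>v\<in>seqs q n1. (\<Sum>u\<in>{u\<in>seqs q n1. H_edge G u v}. Mf u)
                          \<le> card (free_points q n2 G (C v)))"
    by (intro exI[where x = "\<lambda>u. card {m\<in>{..<M}. f1 m = u}"]
        exI[where x = "\<lambda>u. (\<lambda>m. f2 m u) ` {m\<in>{..<M}. f1 m = u}"] conjI ballI
        codes_of_fb_strategy[OF assms(2) strategy])
next
  assume "\<exists>Mf C. M = (\<Sum>u\<in>seqs q n1. Mf u) \<and>
        (\<forall>u\<in>seqs q n1. C u \<subseteq> seqs q n2 \<and> code_sec G (C u) \<and> card (C u) = Mf u) \<and>
        (\<forall>v\<in>seqs q n1. (\<Sum>u\<in>{u\<in>seqs q n1. H_edge G u v}. Mf u)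
                          \<le> card (free_points q n2 G (C v)))"
  then show "\<exists>f1 f2. fb_strategy_sec q G n1 n2 M f1 f2"
    using assms(1) by (elim exE conjE) (simp add: fb_strategy_of_codes[OF _ assms(2)])
qed

end
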